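(* For any integers $n\ge1$ and $\lambda\ge1$, the minimum cost of a solution of the TBI problem with time bound $\lambda$ on a path with $n$ nodes all of which have threshold $1$ is $\lceil n/(2\lambda+1)\rceil$.
   Context: Influence model: a network is a graph $G=(V,E)$; $N(v)$ is the neighbourhood of $v$. Thresholds $t:V\to\{1,2,\dots\}$. An incentive function is $p:V\to\{0,1,2,\dots\}$ with $0\le p(v)\le t(v)$, of cost $\sum_v p(v)$. The influence process: $\mathsf{Influenced}[p,0]=\{v: p(v)=t(v)\}$ and, for $\ell>0$, $\mathsf{Influenced}[p,\ell]=\mathsf{Influenced}[p,\ell-1]\cup\{v: |N(v)\cap \mathsf{Influenced}[p,\ell-1]|\ge t(v)-p(v)\}$. The TBI problem with time bound $\lambda$: find $p$ of minimum cost with $\mathsf{Influenced}[p,\lambda]=V$. A path on $n$ nodes has nodes $0,\dots,n-1$ and edges $\{i,i+1\}$, $0\le i\le n-2$. *)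

theory Defs
  imports Complex_Main
begin

text \<open>Thresholds
t and incentives p are natural-number-valued functions (only values on V matter).\<close>

primrec influenced :: "'a set \<Rightarrow> ('a \<Rightarrow> 'a set) \<Rightarrow> ('a \<Rightarrow> nat) \<Rightarrow> ('a \<Rightarrow> nat) \<Rightarrow> nat \<Rightarrow> 'a set" where
  "influenced V N t p 0 = {v \<in> V. p v = t v}"
| "influenced V N t p (Suc l) = influenced V N t p l \<union>
      {v \<in> V. card (N v \<inter> influenced V N t p l) \<ge> t v - p v}"

definition incentive :: "'a set \<Rightarrow> ('a \<Rightarrow> nat) \<Rightarrow> ('a \<Rightarrow> nat) \<Rightarrow> bool" where
  "incentive V t p \<longleftrightarrow> (\<forall>v\<in>V. p v \<le> t v)"

definition cost :: "'a set \<Rightarrow> ('a \<Rightarrow> nat) \<Rightarrow> nat" where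
  "cost V p = (\<Sum>v\<in>V. p v)"

definition tbi_solution :: "'a set \<Rightarrow> ('a \<Rightarrow> 'a set) \<Rightarrow> ('a \<Rightarrow> nat) \<Rightarrow> nat \<Rightarrow> ('a \<Rightarrow> nat) \<Rightarrow> bool" where
  "tbi_solution V N t lam p \<longleftrightarrow> incentive V t p \<and> influenced V N t p lam = V"

definition tbi_opt :: "'a set \<Rightarrow> ('a \<Rightarrow> 'a set) \<Rightarrow> ('a \<Rightarrow> nat) \<Rightarrow> nat \<Rightarrow> nat" where
  "tbi_opt V N t lam = (LEAST c. \<exists>p. tbi_solution V N t lam p \<and> cost V p = c)"

definition path_nodes :: "nat \<Rightarrow> nat set" where
  "path_nodes n = {..<n}"

definition path_nbr :: "nat \<Rightarrow> nat \<Rightarrow> nat set" where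
  "path_nbr n i = {j. j < n \<and> i < n \<and> (j = i + 1 \<or> i = j + 1)}"

end

theory Submission
  imports Defs
begin

text \<open>With unit thresholds an incentive is either 0 or 1, and the influence spreads from the
nodes with incentive 1 (the seeds) by one hop per round. On the path, after \<open>\<lambda>\<close> rounds
a seed has therefore influenced at most the \<open>2\<lambda> + 1\<close> nodes within distance \<open>\<lambda>\<close>, so
covering all \<open>n\<close> nodes needs at least \<open>\<lceil>n / (2\<lambda> + 1)\<rceil>\<close> seeds; seeds placed at every
\<open>(2\<lambda> + 1)\<close>-th node, starting at node \<open>\<lambda>\<close>, attain this bound.\<close>

lemma influenced_mono:
  assumes "l \<le> l'"
  shows "influenced V N t p l \<subseteq> influenced V N t p l'"
  using assms by (induction l' rule: dec_induct) auto

lemma influenced_Suc_unit_threshold: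
  assumes "\<forall>v\<in>V. p v \<le> 1" and "\<forall>v\<in>V. finite (N v)"
  shows "influenced V N (\<lambda>_. 1) p (Suc l) =
    influenced V N (\<lambda>_. 1) p l \<union> {v \<in> V. N v \<inter> influenced V N (\<lambda>_. 1) p l \<noteq> {}}"
proof -
  have "v \<in> influenced V N (\<lambda>_. 1) p l" if "v \<in> V" "p v = 1" for v
    using that influenced_mono[of 0 l V N "\<lambda>_. 1" p] by auto
  moreover have "card (N v \<inter> A) \<ge> 1 \<longleftrightarrow> N v \<inter> A \<noteq> {}" if "v \<in> V" for v A
    using that assms(2) by (simp add: Suc_le_eq card_gt_0_iff)
  ultimately show ?thesis
    using assms(1) by (fastforce simp: le_Suc_eq)
qed

definition path_nbhd :: "nat \<Rightarrow> nat set \<Rightarrow> nat \<Rightarrow> nat set" where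
  "path_nbhd n S r = {v. v < n \<and> (\<exists>u\<in>S. u \<le> v + r \<and> v \<le> u + r)}"

lemma path_nbhd_Suc:
  assumes "S \<subseteq> {..<n}"
  shows "path_nbhd n S (Suc r) =
    path_nbhd n S r \<union> {v. v < n \<and> path_nbr n v \<inter> path_nbhd n S r \<noteq> {}}"
proof (intro equalityI subsetI)
  fix v assume "v \<in> path_nbhd n S (Suc r)"
  then obtain u where "v < n" "u \<in> S" "u \<le> v + Suc r" "v \<le> u + Suc r"
    by (auto simp: path_nbhd_def)
  moreover have "u < n" using \<open>u \<in> S\<close> assms by auto
  ultimately consider "u \<le> v + r" "v \<le> u + r" | "u = v + Suc r" | "v = u + Suc r"
    by linarith
  then show "v \<in> path_nbhd n S r \<union> {v. v < n \<and> path_nbr n v \<inter> path_nbhd n S r \<noteq> {}}"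
  proof cases
    case 1
    then show ?thesis using \<open>v < n\<close> \<open>u \<in> S\<close> by (auto simp: path_nbhd_def)
  next
    case 2
    then have "v + 1 \<in> path_nbr n v \<inter> path_nbhd n S r"
      using \<open>v < n\<close> \<open>u < n\<close> \<open>u \<in> S\<close> by (auto simp: path_nbr_def path_nbhd_def)
    then show ?thesis using \<open>v < n\<close> by blast
  next
    case 3
    have "v - 1 \<in> path_nbr n v"
      using 3 \<open>v < n\<close> by (auto simp: path_nbr_def)
    moreover have "v - 1 \<in> path_nbhd n S r"
      using 3 \<open>v < n\<close> \<open>u \<in> S\<close> unfolding path_nbhd_def by (intro CollectI conjI bexI[of _ u]) auto
    ultimately show ?thesis using \<open>v < n\<close> by blast
  qed
next
  fix v assume "v \<in> path_nbhd n S r \<union> {v. v < n \<and> path_nbr n v \<inter> path_nbhd n S r \<noteq> {}}"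
  then consider "v \<in> path_nbhd n S r" | w where "v < n" "w \<in> path_nbr n v" "w \<in> path_nbhd n S r"
    by blast
  then show "v \<in> path_nbhd n S (Suc r)"
  proof cases
    case 1
    then show ?thesis unfolding path_nbhd_def by (auto intro: le_SucI)
  next
    case 2
    then obtain u where "u \<in> S" "u \<le> w + r" "w \<le> u + r" "w = v + 1 \<or> v = w + 1"
      by (auto simp: path_nbhd_def path_nbr_def)
    then show ?thesis
      using \<open>v < n\<close> unfolding path_nbhd_def by (intro CollectI conjI bexI[of _ u]) auto
  qed
qed

lemma influenced_path_unit_threshold:
  assumes "\<forall>v<n. p v \<le> 1"
  shows "influenced (path_nodes n) (path_nbr n) (\<lambda>_. 1) p l = path_nbhd n {u. u < n \<and> p u = 1} l"
proof (induction l)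
  case 0
  show ?case by (auto simp: path_nodes_def path_nbhd_def)
next
  case (Suc l)
  have "finite (path_nbr n v)" for v
    by (rule finite_subset[of _ "{..<n}"]) (auto simp: path_nbr_def)
  then have "influenced (path_nodes n) (path_nbr n) (\<lambda>_. 1) p (Suc l) =
      influenced (path_nodes n) (path_nbr n) (\<lambda>_. 1) p l
        \<union> {v \<in> {..<n}. path_nbr n v \<inter> influenced (path_nodes n) (path_nbr n) (\<lambda>_. 1) p l \<noteq> {}}"
    using assms by (subst influenced_Suc_unit_threshold) (auto simp: path_nodes_def)
  also have "\<dots> = path_nbhd n {u. u < n \<and> p u = 1} (Suc l)"
    using Suc.IH by (subst path_nbhd_Suc) auto
  finally show ?case .
qed

lemma cost_eq_card_seeds:
  assumes "finite V" and "\<forall>v\<in>V. p v \<le> 1"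
  shows "cost V p = card {v \<in> V. p v = 1}"
proof -
  have "cost V p = (\<Sum>v\<in>V. of_bool (p v = 1))"
    unfolding cost_def using assms(2) by (intro sum.cong) (auto simp: le_Suc_eq)
  also have "\<dots> = card {v \<in> V. p v = 1}"
    using assms(1) by (simp add: Collect_conj_eq Int_commute)
  finally show ?thesis .
qed

lemma card_le_if_covered_by_intervals:
  fixes A S :: "nat set"
  assumes "finite S" and "A \<subseteq> (\<Union>u\<in>S. {u - r..u + r})"
  shows "card A \<le> card S * (2 * r + 1)"
proof -
  have "card A \<le> card (\<Union>u\<in>S. {u - r..u + r})"
    using assms by (intro card_mono) auto
  also have "\<dots> \<le> (\<Sum>u\<in>S. card {u - r..u + r})"
    using assms(1) by (rule card_UN_le)
  also have "\<dots> \<le> (\<Sum>u\<in>S. 2 * r + 1)"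
    by (intro sum_mono) simp
  finally show ?thesis by simp
qed

lemma path_length_le_cost_mult:
  assumes "tbi_solution (path_nodes n) (path_nbr n) (\<lambda>_. 1) lam p"
  shows "n \<le> cost (path_nodes n) p * (2 * lam + 1)"
proof -
  define S where "S = {u. u < n \<and> p u = 1}"
  have incentive: "\<forall>v<n. p v \<le> 1"
    using assms by (simp add: tbi_solution_def incentive_def path_nodes_def)
  have "{..<n} = path_nbhd n S lam"
    using assms influenced_path_unit_threshold[OF incentive]
    by (simp add: tbi_solution_def path_nodes_def S_def)
  also have "\<dots> \<subseteq> (\<Union>u\<in>S. {u - lam..u + lam})"
    by (auto simp: path_nbhd_def)
  finally have "card {..<n} \<le> card S * (2 * lam + 1)"
    by (intro card_le_if_covered_by_intervals) (simp_all add: S_def)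
  moreover have "cost (path_nodes n) p = card S"
    using incentive by (simp add: cost_eq_card_seeds path_nodes_def S_def)
  ultimately show ?thesis by simp
qed

lemma path_tbi_solution_with_cost_le:
  assumes "n \<le> c * (2 * lam + 1)"
  obtains p where "tbi_solution (path_nodes n) (path_nbr n) (\<lambda>_. 1) lam p"
    and "cost (path_nodes n) p \<le> c"
proof -
  define m where "m = 2 * lam + 1"
  define T where "T = (\<lambda>k. min (k * m + lam) (n - 1)) ` {..<c}"
  define p :: "nat \<Rightarrow> nat" where "p v = of_bool (v \<in> T)" for v
  have incentive: "\<forall>v<n. p v \<le> 1" by (simp add: p_def)
  have "v \<in> path_nbhd n {u. u < n \<and> p u = 1} lam" if "v < n" for v
  proof -
    define k where "k = v div m"
    have "k * m + v mod m = v" "v mod m < m"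
      unfolding k_def by (rule div_mult_mod_eq) (simp add: m_def)
    then have "k * m \<le> v" "v < k * m + m" by linarith+
    moreover have "k * m < c * m" using \<open>k * m \<le> v\<close> that assms by (simp add: m_def)
    then have "k < c" by simp
    define u where "u = min (k * m + lam) (n - 1)"
    have "u \<in> T" unfolding u_def T_def using \<open>k < c\<close> by blast
    moreover have "u < n" "u \<le> v + lam" "v \<le> u + lam"
      using that \<open>k * m \<le> v\<close> \<open>v < k * m + m\<close> by (auto simp: u_def m_def)
    ultimately show ?thesis
      unfolding path_nbhd_def p_def using that by auto
  qed
  then have "path_nbhd n {u. u < n \<and> p u = 1} lam = path_nodes n"
    unfolding path_nodes_def path_nbhd_def by blast
  then have "tbi_solution (path_nodes n) (path_nbr n) (\<lambda>_. 1) lam p"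
    using incentive influenced_path_unit_threshold[OF incentive]
    by (simp add: tbi_solution_def incentive_def path_nodes_def)
  moreover have "cost (path_nodes n) p \<le> c"
  proof -
    have "cost (path_nodes n) p = card {v \<in> {..<n}. p v = 1}"
      using incentive by (simp add: cost_eq_card_seeds path_nodes_def)
    also have "\<dots> \<le> card T" by (intro card_mono) (auto simp: T_def p_def)
    also have "\<dots> \<le> c" unfolding T_def using card_image_le by fastforce
    finally show ?thesis .
  qed
  ultimately show ?thesis by (rule that)
qed

lemma ceiling_divide_le_iff:
  fixes n m k :: nat
  assumes "m > 0"
  shows "\<lceil>real n / real m\<rceil> \<le> int k \<longleftrightarrow> n \<le> k * m"
  using assms by (simp add: ceiling_le_iff pos_divide_le_eq flip: of_nat_mult)

theorem lemma5:
  fixes n lam :: nat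
  assumes "n \<ge> 1" and "lam \<ge> 1"
  shows "(\<exists>p. tbi_solution (path_nodes n) (path_nbr n) (\<lambda>_. 1) lam p)
    \<and> int (tbi_opt (path_nodes n) (path_nbr n) (\<lambda>_. 1) lam)
        = \<lceil>real n / real (2 * lam + 1)\<rceil>"
proof -
  define c where "c = nat \<lceil>real n / real (2 * lam + 1)\<rceil>"
  have c_eq: "int c = \<lceil>real n / real (2 * lam + 1)\<rceil>"
    unfolding c_def using ceiling_mono[of 0 "real n / real (2 * lam + 1)"] by simp
  have width_pos: "2 * lam + 1 > 0" by simp
  have cost_ge: "c \<le> cost (path_nodes n) p"
    if "tbi_solution (path_nodes n) (path_nbr n) (\<lambda>_. 1) lam p" for p
    using path_length_le_cost_mult[OF that]
    unfolding zle_int[symmetric] c_eq ceiling_divide_le_iff[OF width_pos] .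
  have "n \<le> c * (2 * lam + 1)"
    unfolding ceiling_divide_le_iff[OF width_pos, symmetric] c_eq[symmetric] by simp
  then obtain p where sol: "tbi_solution (path_nodes n) (path_nbr n) (\<lambda>_. 1) lam p"
    and "cost (path_nodes n) p \<le> c"
    by (rule path_tbi_solution_with_cost_le)
  then have "cost (path_nodes n) p = c"
    using cost_ge le_antisym by blast
  then have "tbi_opt (path_nodes n) (path_nbr n) (\<lambda>_. 1) lam = c"
    unfolding tbi_opt_def using sol cost_ge by (intro Least_equality) auto
  then show ?thesis using sol c_eq by auto
qed

end
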